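(* Let $p(z)=z^n+a_1z^{n-1}+\dots+a_n$ and $q(z)$ be relatively prime polynomials of degrees $n$ and $k$ respectively, with $k<n$. Let $F$ be a bounded closed set in the complex $w$-plane and let $F^*=\{z\in\mathbb C: q(z)\ne0,\ p(z)/q(z)\in F\}$ be its preimage under $w=\varphi(z)=p(z)/q(z)$, assumed compact and nonempty. Let $m=\min_{z\in F^*}|q(z)|$ and $M=\max_{z\in F^*}|q(z)|$. Then $$[m\,\tau(F)]^{1/n}\le\tau(F^* )\le[M\,\tau(F)]^{1/n}.$$
   Context: Transfinite diameter of a compact $F\subset\mathbb C$: for $n\ge2$, $d_n(F)=\max_{z_1,\dots,z_n\in F}\big(\prod_{1\le j<k\le n}|z_j-z_k|\big)^{2/(n(n-1))}$, and $\tau(F)=\lim_{n\to\infty}d_n(F)$ (the limit exists), with $\tau(F)=0$ if $F$ is finite or empty. It coincides with the logarithmic capacity and the Chebyshev constant $\lim_{n}(\min_{q_n}\max_{z\in F}|q_n(z)|)^{1/n}$, the minimum over monic polynomials of degree $n$. *)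

theory Defs
  imports "HOL-Analysis.Analysis" "HOL-Computational_Algebra.Polynomial"
begin

definition nth_diameter :: "nat \<Rightarrow> complex set \<Rightarrow> real" where
  "nth_diameter n F =
     Sup {(\<Prod>j<n. \<Prod>k\<in>{j<..<n}. cmod (z j - z k)) powr (2 / (real n * (real n - 1))) | z.
            \<forall>i<n. z i \<in> F}"

definition transfinite_diameter :: "complex set \<Rightarrow> real" where
  "transfinite_diameter F = (if finite F then 0 else lim (\<lambda>n. nth_diameter n F))"

end

theory Submission
  imports Defs "HOL-Computational_Algebra.Fundamental_Theorem_Algebra" "HOL-Real_Asymp.Real_Asymp"
begin

text \<open>
  Two estimates tie the transfinite diameter to monic polynomials. Lagrange interpolation at the
  points of an (N+1)-tuple bounds its Vandermonde product by (N+1) sup |P| times the bound for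
  N-tuples, for every monic P of degree N; using the powers of a single monic w of degree L this
  gives tau(K)^L <= sup_K |w|. Conversely, dropping from a nearly extremal (L+1)-tuple the point
  with the smallest product of distances to the others leaves the zeros of a monic w of degree L
  with sup_K |w| <= (d_{L+1}(K) + eps)^L. Together they also show that d_N(K) converges.

  The map phi = p/q transports such polynomials in both directions. If w = prod_j (X - a_j) is
  small on F, then prod_j (p - a_j q) is monic of degree nL and equals q^L (w o phi) on F*, which
  gives tau(F*)^n <= M tau(F). If w = prod_j (X - zeta_j) is small on F*, then
  T = prod_j (X - phi zeta_j) is monic of degree L; the preimages r_1, ..., r_n of a point u of F
  are the zeros of p - u q, whence prod_j |q zeta_j| |T u| = prod_i |w r_i|, which gives
  m tau(F) <= tau(F*)^n.
\<close>

definition vandermonde_abs :: "nat \<Rightarrow> (nat \<Rightarrow> complex) \<Rightarrow> real" where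
  "vandermonde_abs N z = (\<Prod>j<N. \<Prod>k\<in>{j<..<N}. cmod (z j - z k))"

definition discriminant_abs :: "nat set \<Rightarrow> (nat \<Rightarrow> complex) \<Rightarrow> real" where
  "discriminant_abs I x = (\<Prod>a\<in>I. \<Prod>b\<in>I-{a}. cmod (x a - x b))"

lemma vandermonde_abs_nonneg: "vandermonde_abs N z \<ge> 0"
  unfolding vandermonde_abs_def by (intro prod_nonneg) auto

lemma discriminant_abs_eq_0_iff:
  assumes "finite I"
  shows "discriminant_abs I x = 0 \<longleftrightarrow> \<not> inj_on x I"
  using assms unfolding discriminant_abs_def inj_on_def by (auto simp: prod_zero_iff)

lemma discriminant_abs_remove:
  assumes "finite I" "i \<in> I"
  shows "discriminant_abs I x = (\<Prod>b\<in>I-{i}. cmod (x i - x b))^2 * discriminant_abs (I-{i}) x"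
proof -
  have "(\<Prod>b\<in>I-{a}. cmod (x a - x b)) = cmod (x i - x a) * (\<Prod>b\<in>I-{i}-{a}. cmod (x a - x b))"
    if a: "a \<in> I - {i}" for a
  proof -
    have "I - {a} = insert i (I-{i}-{a})" using a assms by auto
    then show ?thesis using assms by (simp add: norm_minus_commute)
  qed
  then have "(\<Prod>a\<in>I-{i}. \<Prod>b\<in>I-{a}. cmod (x a - x b))
      = (\<Prod>a\<in>I-{i}. cmod (x i - x a)) * discriminant_abs (I-{i}) x"
    unfolding discriminant_abs_def by (simp add: prod.distrib)
  moreover have "discriminant_abs I x
      = (\<Prod>b\<in>I-{i}. cmod (x i - x b)) * (\<Prod>a\<in>I-{i}. \<Prod>b\<in>I-{a}. cmod (x a - x b))"
    unfolding discriminant_abs_def using assms by (simp add: prod.remove)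
  ultimately show ?thesis by (simp add: power2_eq_square)
qed

lemma vandermonde_abs_Suc:
  "vandermonde_abs (Suc N) x = (\<Prod>j<N. cmod (x j - x N)) * vandermonde_abs N x"
proof -
  have "{j<..<Suc N} = insert N {j<..<N}" if "j < N" for j using that by auto
  then have "(\<Prod>j<N. \<Prod>k\<in>{j<..<Suc N}. cmod (x j - x k))
      = (\<Prod>j<N. cmod (x j - x N) * (\<Prod>k\<in>{j<..<N}. cmod (x j - x k)))"
    by (intro prod.cong) auto
  moreover have "{N<..<Suc N} = {}" by auto
  ultimately have "vandermonde_abs (Suc N) x
      = (\<Prod>j<N. cmod (x j - x N) * (\<Prod>k\<in>{j<..<N}. cmod (x j - x k)))"
    unfolding vandermonde_abs_def by (simp add: prod.lessThan_Suc)
  then show ?thesis unfolding vandermonde_abs_def by (simp add: prod.distrib)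
qed

lemma discriminant_abs_lessThan: "discriminant_abs {..<N} x = vandermonde_abs N x ^ 2"
proof (induction N)
  case 0
  show ?case by (simp add: discriminant_abs_def vandermonde_abs_def)
next
  case (Suc N)
  have "discriminant_abs {..<Suc N} x
      = (\<Prod>b\<in>{..<Suc N}-{N}. cmod (x N - x b))^2 * discriminant_abs ({..<Suc N}-{N}) x"
    by (rule discriminant_abs_remove) auto
  also have "{..<Suc N}-{N} = {..<N}" by auto
  finally show ?case
    using Suc by (simp add: vandermonde_abs_Suc power_mult_distrib norm_minus_commute)
qed

lemma vandermonde_abs_eq_0_iff: "vandermonde_abs N x = 0 \<longleftrightarrow> \<not> inj_on x {..<N}"
  using discriminant_abs_eq_0_iff[of "{..<N}" x] by (simp add: discriminant_abs_lessThan)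

lemma discriminant_abs_reindex:
  assumes "bij_betw h A B"
  shows "discriminant_abs B x = discriminant_abs A (x \<circ> h)"
proof -
  have "(\<Prod>b\<in>B-{h a}. cmod (x (h a) - x b)) = (\<Prod>b\<in>A-{a}. cmod (x (h a) - x (h b)))"
    if a: "a \<in> A" for a
  proof -
    have "bij_betw h (A-{a}) (B-{h a})"
      using bij_betw_DiffI[OF assms, of "{a}" "{h a}"] a assms by (auto dest: bij_betwE)
    then show ?thesis by (simp add: prod.reindex_bij_betw[symmetric])
  qed
  then show ?thesis
    unfolding discriminant_abs_def prod.reindex_bij_betw[OF assms, symmetric] by simp
qed

lemma discriminant_abs_le:
  assumes "\<And>y. (\<forall>j<N. y j \<in> K) \<Longrightarrow> vandermonde_abs N y \<le> W"
    and "finite J" "card J = N" "x ` J \<subseteq> K"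
  shows "discriminant_abs J x \<le> W ^ 2"
proof -
  obtain h where h: "bij_betw h {..<N} J"
    using finite_same_card_bij[of "{..<N}" J] assms(2,3) by auto
  have "discriminant_abs J x = vandermonde_abs N (x \<circ> h) ^ 2"
    by (simp add: discriminant_abs_reindex[OF h] discriminant_abs_lessThan)
  also have "\<dots> \<le> W ^ 2"
    using h assms(4) by (intro power_mono assms(1) vandermonde_abs_nonneg) (auto simp: bij_betw_def)
  finally show ?thesis .
qed

lemma nth_diameter_eq:
  "nth_diameter N K =
     Sup {vandermonde_abs N z powr (2 / (real N * (real N - 1))) | z. \<forall>i<N. z i \<in> K}"
  unfolding nth_diameter_def vandermonde_abs_def by simp

lemma vandermonde_abs_bounded:
  assumes "bounded K"
  obtains C where "\<And>z. (\<forall>i<N. z i \<in> K) \<Longrightarrow> vandermonde_abs N z \<le> C"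
proof -
  obtain B where B: "\<forall>x\<in>K. norm x \<le> B" using assms bounded_iff by auto
  have "vandermonde_abs N z \<le> (\<Prod>j<N. \<Prod>k\<in>{j<..<N}. 2 * B)" if z: "\<forall>i<N. z i \<in> K" for z
    unfolding vandermonde_abs_def
  proof (intro prod_mono conjI)
    fix j k assume "j \<in> {..<N}" "k \<in> {j<..<N}"
    then have "cmod (z j) \<le> B" "cmod (z k) \<le> B" using z B by auto
    then show "cmod (z j - z k) \<le> 2 * B" using norm_triangle_ineq4[of "z j" "z k"] by linarith
  qed (auto intro: prod_nonneg)
  then show ?thesis by (rule that)
qed

lemma nth_diameter_exponent_nonneg: "0 \<le> 2 / (real N * (real N - 1))"
  by (cases N) auto

lemma nth_diameter_le:
  assumes "K \<noteq> {}" and "\<And>z. (\<forall>i<N. z i \<in> K) \<Longrightarrow> vandermonde_abs N z \<le> B"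
  shows "nth_diameter N K \<le> B powr (2 / (real N * (real N - 1)))"
  unfolding nth_diameter_eq
proof (rule cSup_least)
  obtain c where "c \<in> K" using assms(1) by auto
  then show "{vandermonde_abs N z powr (2 / (real N * (real N - 1))) | z. \<forall>i<N. z i \<in> K} \<noteq> {}"
    by (auto intro!: exI[of _ "\<lambda>_. c"])
next
  fix t assume "t \<in> {vandermonde_abs N z powr (2 / (real N * (real N - 1))) | z. \<forall>i<N. z i \<in> K}"
  then obtain z where "\<forall>i<N. z i \<in> K" "t = vandermonde_abs N z powr (2 / (real N * (real N - 1)))"
    by blast
  then show "t \<le> B powr (2 / (real N * (real N - 1)))"
    by (auto intro!: powr_mono2 nth_diameter_exponent_nonneg vandermonde_abs_nonneg assms(2))
qed

lemma vandermonde_abs_powr_le_nth_diameter: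
  assumes "bounded K" "\<forall>i<N. z i \<in> K"
  shows "vandermonde_abs N z powr (2 / (real N * (real N - 1))) \<le> nth_diameter N K"
proof -
  obtain C where "\<And>z. (\<forall>i<N. z i \<in> K) \<Longrightarrow> vandermonde_abs N z \<le> C"
    using vandermonde_abs_bounded[OF assms(1)] by blast
  then have "bdd_above {vandermonde_abs N z powr (2 / (real N * (real N - 1))) | z. \<forall>i<N. z i \<in> K}"
    by (intro bdd_aboveI[where M = "C powr (2 / (real N * (real N - 1)))"])
      (auto intro!: powr_mono2 vandermonde_abs_nonneg nth_diameter_exponent_nonneg)
  then show ?thesis unfolding nth_diameter_eq using assms(2) by (intro cSup_upper) auto
qed

lemma vandermonde_abs_le_nth_diameter:
  assumes "bounded K" "N \<ge> 2" "\<forall>i<N. z i \<in> K"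
  shows "vandermonde_abs N z \<le> nth_diameter N K powr (real N * (real N - 1) / 2)"
proof -
  have "vandermonde_abs N z = (vandermonde_abs N z powr (2 / (real N * (real N - 1))))
      powr (real N * (real N - 1) / 2)"
    using assms(2) by (simp add: powr_powr vandermonde_abs_nonneg)
  also have "\<dots> \<le> nth_diameter N K powr (real N * (real N - 1) / 2)"
    using assms(2) by (intro powr_mono2 vandermonde_abs_powr_le_nth_diameter[OF assms(1,3)]) auto
  finally show ?thesis .
qed

lemma nth_diameter_nonneg:
  assumes "bounded K" "K \<noteq> {}"
  shows "nth_diameter N K \<ge> 0"
proof -
  obtain c where "c \<in> K" using assms(2) by auto
  then show ?thesis
    using vandermonde_abs_powr_le_nth_diameter[OF assms(1), of N "\<lambda>_. c"]
    by (auto intro: order_trans[OF powr_ge_zero])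
qed

lemma nth_diameter_pos:
  assumes "bounded K" "infinite K"
  shows "nth_diameter N K > 0"
proof -
  obtain B where B: "finite B" "card B = N" "B \<subseteq> K"
    using infinite_arbitrarily_large[OF assms(2)] by blast
  obtain z where z: "bij_betw z {..<N} B" using finite_same_card_bij[of "{..<N}" B] B by auto
  then have "vandermonde_abs N z > 0"
    using vandermonde_abs_eq_0_iff[of N z] vandermonde_abs_nonneg[of N z] by (auto simp: bij_betw_def)
  then have "0 < vandermonde_abs N z powr (2 / (real N * (real N - 1)))" by simp
  also have "\<dots> \<le> nth_diameter N K"
    using z B by (intro vandermonde_abs_powr_le_nth_diameter assms(1)) (auto simp: bij_betw_def)
  finally show ?thesis .
qed

lemma exists_vandermonde_abs_gt:
  assumes "bounded K" "K \<noteq> {}" "N \<ge> 2" "c < nth_diameter N K powr (real N * (real N - 1) / 2)"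
  obtains z where "\<forall>i<N. z i \<in> K" "c < vandermonde_abs N z"
proof -
  obtain a where a: "a \<in> K" using assms(2) by auto
  show ?thesis
  proof (cases "c \<ge> 0")
    case False
    then have "c < vandermonde_abs N (\<lambda>_. a)"
      using vandermonde_abs_nonneg[of N "\<lambda>_. a"] by linarith
    then show ?thesis using that[of "\<lambda>_. a"] a by blast
  next
    case True
    define e where "e = 2 / (real N * (real N - 1))"
    have e: "e > 0" using assms(3) by (simp add: e_def)
    have "c powr e < (nth_diameter N K powr (real N * (real N - 1) / 2)) powr e"
      using True e assms(4) by (intro powr_less_mono2) auto
    also have "\<dots> = nth_diameter N K"
      using assms(3) nth_diameter_nonneg[OF assms(1,2)] by (simp add: powr_powr e_def)
    also have "\<dots> = Sup {vandermonde_abs N z powr e | z. \<forall>i<N. z i \<in> K}"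
      unfolding nth_diameter_eq e_def ..
    finally obtain t where "t \<in> {vandermonde_abs N z powr e | z. \<forall>i<N. z i \<in> K}" "c powr e < t"
      by (rule less_cSupE) (use a in \<open>auto intro!: exI[of _ "\<lambda>_. a"]\<close>)
    then obtain z where z: "\<forall>i<N. z i \<in> K" "c powr e < vandermonde_abs N z powr e"
      by blast
    then have "c < vandermonde_abs N z"
      using True e vandermonde_abs_nonneg[of N z] powr_mono2[of e "vandermonde_abs N z" c]
      by (auto simp: not_le[symmetric])
    then show ?thesis using that z(1) by blast
  qed
qed

lemma linear_factors_prod:
  fixes a :: "nat \<Rightarrow> complex"
  assumes "finite J"
  shows "degree (\<Prod>j\<in>J. [:-a j, 1:]) = card J" and "lead_coeff (\<Prod>j\<in>J. [:-a j, 1:]) = 1"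
    and "poly (\<Prod>j\<in>J. [:-a j, 1:]) z = (\<Prod>j\<in>J. z - a j)"
proof -
  show "degree (\<Prod>j\<in>J. [:-a j, 1:]) = card J"
    by (subst degree_prod_eq_sum_degree) auto
  show "lead_coeff (\<Prod>j\<in>J. [:-a j, 1:]) = 1"
    by (subst lead_coeff_prod) auto
qed (simp add: poly_prod)

lemma lagrange_interpolation:
  fixes P :: "complex poly"
  assumes inj: "inj_on x {..N}" and deg: "degree P \<le> N"
  shows "P = (\<Sum>i\<le>N. smult (poly P (x i) / (\<Prod>j\<in>{..N}-{i}. x i - x j))
                               (\<Prod>j\<in>{..N}-{i}. [:-x j, 1:]))"
    (is "P = ?Q")
proof -
  have poly_Q: "poly ?Q (x k) = poly P (x k)" if k: "k \<le> N" for k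
  proof -
    have "poly (\<Prod>j\<in>{..N}-{i}. [:-x j, 1:]) (x k) = 0" if "i \<le> N" "i \<noteq> k" for i
      using that k by (auto simp: poly_prod prod_zero_iff)
    then have "poly ?Q (x k) = poly P (x k) / (\<Prod>j\<in>{..N}-{k}. x k - x j)
        * poly (\<Prod>j\<in>{..N}-{k}. [:-x j, 1:]) (x k)"
      using k by (simp add: poly_sum sum.remove[of _ k])
    moreover have "(\<Prod>j\<in>{..N}-{k}. x k - x j) \<noteq> 0"
      using inj k by (auto simp: inj_on_def)
    ultimately show ?thesis by (simp add: poly_prod)
  qed
  have "degree ?Q \<le> N"
    by (intro degree_sum_le order.trans[OF degree_smult_le])
      (auto simp: linear_factors_prod(1))
  then have "degree (P - ?Q) \<le> N" using deg by (simp add: degree_diff_le)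
  show "P = ?Q"
  proof (rule ccontr)
    assume "P \<noteq> ?Q"
    then have nz: "P - ?Q \<noteq> 0" by simp
    have "x ` {..N} \<subseteq> {z. poly (P - ?Q) z = 0}" using poly_Q by auto
    then have "card (x ` {..N}) \<le> card {z. poly (P - ?Q) z = 0}"
      by (intro card_mono poly_roots_finite nz)
    also have "\<dots> \<le> degree (P - ?Q)" by (rule card_poly_roots_bound[OF nz])
    finally show False using \<open>degree (P - ?Q) \<le> N\<close> card_image[OF inj] by simp
  qed
qed

lemma lagrange_sum_eq_coeff:
  fixes P :: "complex poly"
  assumes "inj_on x {..N}" "degree P \<le> N"
  shows "(\<Sum>i\<le>N. poly P (x i) / (\<Prod>j\<in>{..N}-{i}. x i - x j)) = coeff P N"
proof -
  have "coeff (\<Prod>j\<in>{..N}-{i}. [:-x j, 1:]) N = 1" if "i \<le> N" for i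
    using linear_factors_prod(1,2)[of "{..N}-{i}" x] that by simp
  then show ?thesis
    by (subst (2) lagrange_interpolation[OF assms]) (simp add: coeff_sum)
qed

lemma vandermonde_abs_Suc_le_factor:
  assumes W: "\<And>y. (\<forall>j<N. y j \<in> K) \<Longrightarrow> vandermonde_abs N y \<le> W" and "W \<ge> 0"
    and x: "\<forall>j\<le>N. x j \<in> K" and i: "i \<le> N"
  shows "vandermonde_abs (Suc N) x \<le> (\<Prod>j\<in>{..N}-{i}. cmod (x i - x j)) * W"
proof -
  define D where "D = (\<Prod>j\<in>{..N}-{i}. cmod (x i - x j))"
  have "vandermonde_abs (Suc N) x ^ 2 = discriminant_abs {..N} x"
    by (simp only: discriminant_abs_lessThan[symmetric] lessThan_Suc_atMost)
  also have "\<dots> = D ^ 2 * discriminant_abs ({..N}-{i}) x"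
    unfolding D_def by (rule discriminant_abs_remove) (use i in auto)
  also have "\<dots> \<le> D ^ 2 * W ^ 2"
    by (intro mult_left_mono discriminant_abs_le[of N K, OF W]) (use x i in auto)
  finally have "vandermonde_abs (Suc N) x ^ 2 \<le> (D * W) ^ 2"
    by (simp only: power_mult_distrib)
  then show ?thesis
    unfolding D_def by (rule power2_le_imp_le) (use \<open>W \<ge> 0\<close> in \<open>auto intro!: mult_nonneg_nonneg prod_nonneg\<close>)
qed

lemma vandermonde_abs_Suc_le:
  fixes P :: "complex poly"
  assumes P: "lead_coeff P = 1" "degree P = N" and A: "\<forall>z\<in>K. cmod (poly P z) \<le> A"
    and W: "\<And>y. (\<forall>j<N. y j \<in> K) \<Longrightarrow> vandermonde_abs N y \<le> W" "W \<ge> 0"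
    and x: "\<forall>j\<le>N. x j \<in> K"
  shows "vandermonde_abs (Suc N) x \<le> real (Suc N) * A * W"
proof (cases "inj_on x {..N}")
  case False
  then have "vandermonde_abs (Suc N) x = 0"
    by (simp add: vandermonde_abs_eq_0_iff lessThan_Suc_atMost)
  moreover have "cmod (poly P (x 0)) \<le> A" using A x by auto
  then have "A \<ge> 0" by (rule order_trans[OF norm_ge_zero])
  ultimately show ?thesis using W(2) by simp
next
  case inj: True
  define V where "V = vandermonde_abs (Suc N) x"
  have "V \<noteq> 0" using inj by (simp add: V_def vandermonde_abs_eq_0_iff lessThan_Suc_atMost)
  then have V: "V > 0" using vandermonde_abs_nonneg[of "Suc N" x] by (simp add: V_def)
  have "cmod (poly P (x i)) / (\<Prod>j\<in>{..N}-{i}. cmod (x i - x j)) \<le> A * (W / V)"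
    if i: "i \<le> N" for i
  proof -
    define D where "D = (\<Prod>j\<in>{..N}-{i}. cmod (x i - x j))"
    have "V \<le> D * W"
      unfolding V_def D_def by (rule vandermonde_abs_Suc_le_factor[of N K, OF W x i])
    moreover have D: "D > 0"
      unfolding D_def using inj i by (intro prod_pos) (auto simp: inj_on_def)
    ultimately have "1 / D \<le> W / V" using V by (simp add: divide_simps mult.commute)
    moreover have "cmod (poly P (x i)) \<le> A" using A x i by auto
    ultimately have "cmod (poly P (x i)) * (1 / D) \<le> A * (W / V)"
      using V W(2) D by (intro mult_mono) (auto intro: order_trans[OF norm_ge_zero])
    then show ?thesis by (simp add: D_def)
  qed
  then have "cmod (\<Sum>i\<le>N. poly P (x i) / (\<Prod>j\<in>{..N}-{i}. x i - x j)) \<le> (\<Sum>i\<le>N. A * (W / V))"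
    by (intro order.trans[OF norm_sum] sum_mono) (simp add: norm_divide prod_norm)
  then have "1 \<le> real (Suc N) * (A * W / V)"
    using lagrange_sum_eq_coeff[OF inj, of P] P by simp
  then show ?thesis using V by (simp add: V_def field_simps)
qed

lemma monic_polys_geometric_bound:
  fixes w :: "complex poly"
  assumes "bounded K" "K \<noteq> {}" and w: "lead_coeff w = 1" "degree w = L" "L \<ge> 1"
    and a: "a > 0" "\<forall>z\<in>K. cmod (poly w z) \<le> a ^ L"
  obtains G where "G \<ge> 1"
    "\<And>N. \<exists>P. lead_coeff P = 1 \<and> degree P = N \<and> (\<forall>z\<in>K. cmod (poly P z) \<le> G * a ^ N)"
proof -
  obtain c where c: "c \<in> K" using assms(2) by auto
  obtain B where B: "\<forall>z\<in>K. cmod (z - c) \<le> B"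
    using assms(1) bounded_any_center[of K c] by (auto simp: dist_norm norm_minus_commute)
  define g where "g = max 1 (B / a)"
  have "g \<ge> 1" "B / a \<le> g" by (simp_all add: g_def)
  then have g: "g \<ge> 1" "B \<le> g * a" using a by (simp_all add: pos_divide_le_eq)
  have "\<exists>P. lead_coeff P = 1 \<and> degree P = N \<and> (\<forall>z\<in>K. cmod (poly P z) \<le> g ^ L * a ^ N)" for N
  proof (intro exI conjI ballI)
    define P where "P = w ^ (N div L) * [:-c, 1:] ^ (N mod L)"
    show "lead_coeff P = 1"
      using w(1) by (simp add: P_def lead_coeff_mult lead_coeff_power)
    have "w \<noteq> 0" using w(1) by auto
    then have "degree P = N div L * L + N mod L"
      using w(2) by (simp add: P_def degree_mult_eq degree_power_eq)
    then show "degree P = N" by simp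
    fix z assume z: "z \<in> K"
    have "cmod (poly P z) = cmod (poly w z) ^ (N div L) * cmod (z - c) ^ (N mod L)"
      by (simp add: P_def norm_mult norm_power)
    also have "\<dots> \<le> (a ^ L) ^ (N div L) * (g * a) ^ (N mod L)"
      using a z B g by (intro mult_mono power_mono) (auto intro: order_trans[OF norm_ge_zero])
    also have "\<dots> = g ^ (N mod L) * a ^ N"
      by (simp add: power_mult_distrib mult_ac flip: power_mult power_add)
    also have "\<dots> \<le> g ^ L * a ^ N"
      using g a w(3) by (intro mult_right_mono power_increasing) auto
    finally show "cmod (poly P z) \<le> g ^ L * a ^ N" .
  qed
  then show ?thesis using that[of "g ^ L"] g by simp
qed

lemma vandermonde_abs_le_geometric:
  assumes "G \<ge> 0" "a \<ge> 0"
    and P: "\<And>N. \<exists>P. lead_coeff P = 1 \<and> degree P = N \<and> (\<forall>z\<in>K. cmod (poly P z) \<le> G * a ^ N)"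
  shows "(\<forall>j<M. y j \<in> K) \<Longrightarrow> vandermonde_abs M y \<le> fact M * G ^ M * a ^ (M choose 2)"
proof (induction M arbitrary: y)
  case 0
  then show ?case by (simp add: vandermonde_abs_def choose_two)
next
  case (Suc M)
  obtain Q where Q: "lead_coeff Q = 1" "degree Q = M" "\<forall>z\<in>K. cmod (poly Q z) \<le> G * a ^ M"
    using P by blast
  have choose: "Suc M choose 2 = M + (M choose 2)" by (simp add: numeral_2_eq_2)
  have "vandermonde_abs (Suc M) y \<le> real (Suc M) * (G * a ^ M) * (fact M * G ^ M * a ^ (M choose 2))"
    using Suc assms by (intro vandermonde_abs_Suc_le[of Q M K, OF Q]) auto
  also have "\<dots> = fact (Suc M) * G ^ Suc M * a ^ (Suc M choose 2)"
    unfolding choose by (simp add: power_add mult_ac)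
  finally show ?case .
qed

lemma real_choose_two: "real (M choose 2) = real M * (real M - 1) / 2"
  by (induction M) (auto simp: numeral_2_eq_2 field_simps)

lemma nth_diameter_le_chebyshev:
  fixes w :: "complex poly"
  assumes "bounded K" "K \<noteq> {}" "lead_coeff w = 1" "degree w = L" "L \<ge> 1"
    and "a > 0" "\<forall>z\<in>K. cmod (poly w z) \<le> a ^ L"
  obtains G where "G \<ge> 1"
    "\<And>M. M \<ge> 2 \<Longrightarrow> nth_diameter M K \<le> (real M * G) powr (2 / (real M - 1)) * a"
proof -
  obtain G where G: "G \<ge> 1"
    "\<And>N. \<exists>P. lead_coeff P = 1 \<and> degree P = N \<and> (\<forall>z\<in>K. cmod (poly P z) \<le> G * a ^ N)"
    using monic_polys_geometric_bound[OF assms] by blast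
  have "nth_diameter M K \<le> (real M * G) powr (2 / (real M - 1)) * a" if M: "M \<ge> 2" for M
  proof -
    define e where "e = 2 / (real M * (real M - 1))"
    have e: "e \<ge> 0" "real M * e = 2 / (real M - 1)" "real (M choose 2) * e = 1"
      using M by (simp_all add: e_def real_choose_two)
    have G_e: "(G ^ M) powr e = G powr (2 / (real M - 1))"
      using G(1) e(2) by (simp add: powr_powr flip: powr_realpow)
    have a_e: "(a ^ (M choose 2)) powr e = a"
      using \<open>a > 0\<close> e(3) by (simp add: powr_powr flip: powr_realpow)
    have "fact M powr e \<le> (real M ^ M) powr e"
      using fact_le_power[of M] e(1) by (intro powr_mono2) auto
    also have "\<dots> = real M powr (2 / (real M - 1))"
      using M e(2) by (simp add: powr_powr flip: powr_realpow)
    finally have fact_e: "fact M powr e \<le> real M powr (2 / (real M - 1))" .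
    have "nth_diameter M K \<le> (fact M * G ^ M * a ^ (M choose 2)) powr e"
      unfolding e_def using assms(2)
      by (rule nth_diameter_le, intro vandermonde_abs_le_geometric[OF _ _ G(2)])
        (use G(1) \<open>a > 0\<close> in auto)
    also have "\<dots> = fact M powr e * G powr (2 / (real M - 1)) * a"
      using G(1) \<open>a > 0\<close> by (simp add: powr_mult G_e a_e)
    also have "\<dots> \<le> (real M * G) powr (2 / (real M - 1)) * a"
      using fact_e G(1) \<open>a > 0\<close> by (simp add: powr_mult)
    finally show ?thesis .
  qed
  then show ?thesis using that G(1) by blast
qed

lemma tendsto_chebyshev_factor:
  assumes "G > 0"
  shows "(\<lambda>M. (real M * G) powr (2 / (real M - 1)) * a) \<longlonglongrightarrow> a"
proof -
  have "(\<lambda>M. (real M * G) powr (2 / (real M - 1))) \<longlonglongrightarrow> 1"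
    using assms by real_asymp
  then show ?thesis using tendsto_mult_right[of _ 1 sequentially a] by simp
qed

lemma exists_le_geometric_mean:
  fixes c :: "'a \<Rightarrow> real"
  assumes "finite I" "I \<noteq> {}" "\<And>i. i \<in> I \<Longrightarrow> c i \<ge> 0"
  shows "\<exists>i\<in>I. c i \<le> (\<Prod>i\<in>I. c i) powr (1 / real (card I))"
proof (rule ccontr)
  define g where "g = (\<Prod>i\<in>I. c i) powr (1 / real (card I))"
  assume "\<not> ?thesis"
  then have less: "\<And>i. i \<in> I \<Longrightarrow> g < c i" by (auto simp: g_def not_le)
  have "g \<ge> 0" by (simp add: g_def)
  obtain i where "i \<in> I" using assms(2) by auto
  then have "(\<Prod>i\<in>I. g) < (\<Prod>i\<in>I. c i)"
    using less assms(1) \<open>g \<ge> 0\<close> by (intro prod_mono_strict[of i]) (auto intro: less_imp_le le_less_trans)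
  moreover have "(\<Prod>i\<in>I. g) = (\<Prod>i\<in>I. c i)"
  proof (cases "(\<Prod>i\<in>I. c i) = 0")
    case False
    moreover have "(\<Prod>i\<in>I. c i) \<ge> 0" using assms(3) by (simp add: prod_nonneg)
    ultimately show ?thesis using assms(1,2) by (simp add: g_def powr_power card_gt_0_iff)
  next
    case True
    then show ?thesis using assms(1,2) by (simp add: g_def card_gt_0_iff del: prod_zero_iff)
  qed
  ultimately show False by simp
qed

text \<open>The quotient of the two products over j is the ratio of the Vandermonde products of
  x(i := z) and x, since replacing x i by z changes only the factors involving i.\<close>

lemma vandermonde_abs_replace:
  assumes S: "\<And>y. (\<forall>j<N. y j \<in> K) \<Longrightarrow> vandermonde_abs N y \<le> S"
    and x: "\<forall>j<N. x j \<in> K" and i: "i < N" and z: "z \<in> K"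
  shows "(\<Prod>j\<in>{..<N}-{i}. cmod (z - x j)) * vandermonde_abs N x
           \<le> S * (\<Prod>j\<in>{..<N}-{i}. cmod (x i - x j))"
proof -
  define y where "y = x(i := z)"
  define P where "P = (\<Prod>j\<in>{..<N}-{i}. cmod (z - x j))"
  define D where "D = (\<Prod>j\<in>{..<N}-{i}. cmod (x i - x j))"
  have disc_y: "discriminant_abs ({..<N}-{i}) y = discriminant_abs ({..<N}-{i}) x"
    unfolding discriminant_abs_def y_def by (intro prod.cong refl) auto
  have "vandermonde_abs N y ^ 2 = P ^ 2 * discriminant_abs ({..<N}-{i}) x"
    unfolding discriminant_abs_lessThan[symmetric] disc_y[symmetric] P_def
    by (subst discriminant_abs_remove[of _ i]) (use i in \<open>auto simp: y_def intro!: prod.cong\<close>)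
  moreover have "vandermonde_abs N x ^ 2 = D ^ 2 * discriminant_abs ({..<N}-{i}) x"
    unfolding discriminant_abs_lessThan[symmetric] D_def
    by (rule discriminant_abs_remove) (use i in auto)
  ultimately have "(P * vandermonde_abs N x) ^ 2 = (D * vandermonde_abs N y) ^ 2"
    by (simp add: power_mult_distrib)
  also have "\<dots> \<le> (D * S) ^ 2"
    using S[of y] x z by (intro power_mono mult_left_mono)
      (auto simp: y_def D_def intro!: prod_nonneg vandermonde_abs_nonneg mult_nonneg_nonneg)
  finally have sq: "(P * vandermonde_abs N x) ^ 2 \<le> (D * S) ^ 2" .
  have "S \<ge> 0" using S[OF x] vandermonde_abs_nonneg[of N x] by linarith
  from sq have "P * vandermonde_abs N x \<le> D * S"
    by (rule power2_le_imp_le) (use \<open>S \<ge> 0\<close> in \<open>auto simp: D_def intro!: mult_nonneg_nonneg prod_nonneg\<close>)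
  then show ?thesis by (simp add: P_def D_def mult.commute)
qed

lemma exists_small_vandermonde_factor:
  assumes K: "bounded K" and N: "N \<ge> 2" and x: "\<forall>j<N. x j \<in> K"
  obtains i where "i < N" "(\<Prod>j\<in>{..<N}-{i}. cmod (x i - x j)) \<le> nth_diameter N K ^ (N - 1)"
proof -
  define D where "D i = (\<Prod>j\<in>{..<N}-{i}. cmod (x i - x j))" for i
  define d where "d = nth_diameter N K"
  have d: "d \<ge> 0" using nth_diameter_nonneg[OF K] x N by (force simp: d_def)
  have "(\<Prod>i<N. D i) = vandermonde_abs N x ^ 2"
    unfolding D_def discriminant_abs_lessThan[symmetric] discriminant_abs_def ..
  moreover have "\<exists>i\<in>{..<N}. D i \<le> (\<Prod>i<N. D i) powr (1 / real (card {..<N}))"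
    by (rule exists_le_geometric_mean) (use N in \<open>auto simp: D_def lessThan_empty_iff intro: prod_nonneg\<close>)
  ultimately obtain i where i: "i < N" "D i \<le> (vandermonde_abs N x ^ 2) powr (1 / real N)" by auto
  have "(vandermonde_abs N x ^ 2) powr (1 / real N)
      \<le> ((d powr (real N * (real N - 1) / 2)) ^ 2) powr (1 / real N)"
    using vandermonde_abs_le_nth_diameter[OF K N x]
    by (intro powr_mono2 power_mono) (auto simp: d_def vandermonde_abs_nonneg)
  also have "\<dots> = d powr (real N * (real N - 1) / 2 * 2 * (1 / real N))"
    by (simp add: powr_powr flip: powr_realpow)
  also have "real N * (real N - 1) / 2 * 2 * (1 / real N) = real (N - 1)"
    using N by (simp add: of_nat_diff)
  also have "d powr real (N - 1) = d ^ (N - 1)"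
  proof (cases "d = 0")
    case False
    then show ?thesis using d by (intro powr_realpow) simp
  qed (use N in simp)
  finally show ?thesis using that i by (auto simp: D_def d_def)
qed

lemma fekete_polynomial:
  assumes K: "bounded K" "infinite K" and L: "L \<ge> 1" and c: "nth_diameter (Suc L) K < c"
  obtains a :: "nat \<Rightarrow> complex" and J :: "nat set"
  where "finite J" "card J = L" "a ` J \<subseteq> K" "\<forall>z\<in>K. cmod (poly (\<Prod>j\<in>J. [:-a j, 1:]) z) \<le> c ^ L"
proof -
  define N where "N = Suc L"
  define d where "d = nth_diameter N K"
  define S where "S = d powr (real N * (real N - 1) / 2)"
  define \<theta> where "\<theta> = (c / d) ^ L"
  have N: "N \<ge> 2" using L by (simp add: N_def)
  have d: "d > 0" unfolding d_def using nth_diameter_pos[OF K] .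
  then have "\<theta> > 1" "S > 0" using c L by (simp_all add: \<theta>_def S_def N_def d_def one_less_power)
  then have "S / \<theta> < S" by (simp add: divide_less_eq)
  then obtain x where x: "\<forall>j<N. x j \<in> K" and x_large: "S / \<theta> < vandermonde_abs N x"
    using exists_vandermonde_abs_gt[OF K(1) _ N] K(2) unfolding S_def d_def by blast
  define V where "V = vandermonde_abs N x"
  have "0 < S / \<theta>" using \<open>\<theta> > 1\<close> \<open>S > 0\<close> by simp
  then have V: "S < \<theta> * V" "V > 0" using x_large \<open>\<theta> > 1\<close>
    by (simp add: V_def divide_less_eq mult.commute, simp add: V_def)
  obtain i where i: "i < N" and D: "(\<Prod>j\<in>{..<N}-{i}. cmod (x i - x j)) \<le> d ^ L"
    using exists_small_vandermonde_factor[OF K(1) N x] by (auto simp: N_def d_def)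
  show ?thesis
  proof (rule that[of "{..<N}-{i}" x])
    show "card ({..<N}-{i}) = L" using i by (simp add: N_def)
    show "x ` ({..<N}-{i}) \<subseteq> K" using x by auto
    show "\<forall>z\<in>K. cmod (poly (\<Prod>j\<in>{..<N}-{i}. [:-x j, 1:]) z) \<le> c ^ L"
    proof
      fix z assume z: "z \<in> K"
      have "(\<Prod>j\<in>{..<N}-{i}. cmod (z - x j)) * V \<le> S * (\<Prod>j\<in>{..<N}-{i}. cmod (x i - x j))"
        unfolding V_def using vandermonde_abs_le_nth_diameter[OF K(1) N] x i z
        by (intro vandermonde_abs_replace) (auto simp: S_def d_def)
      also have "\<dots> \<le> (\<theta> * V) * d ^ L"
        using V D d \<open>\<theta> > 1\<close> by (intro mult_mono) (auto intro: prod_nonneg)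
      also have "\<dots> = c ^ L * V"
        using d by (simp add: \<theta>_def power_divide)
      finally show "cmod (poly (\<Prod>j\<in>{..<N}-{i}. [:-x j, 1:]) z) \<le> c ^ L"
        using V(2) by (simp add: linear_factors_prod(3) prod_norm)
    qed
  qed simp
qed

lemma tendsto_Inf_of_eventually_less:
  fixes x :: "nat \<Rightarrow> real"
  assumes bdd: "bdd_below (range x)"
    and less: "\<And>N \<epsilon>. N \<ge> n0 \<Longrightarrow> \<epsilon> > 0 \<Longrightarrow> eventually (\<lambda>M. x M < x N + \<epsilon>) sequentially"
  shows "x \<longlonglongrightarrow> (INF N\<in>{n0..}. x N)"
proof -
  have bdd': "bdd_below (x ` {n0..})" using bdd by (rule bdd_below_mono) auto
  show ?thesis
  proof (rule order_tendstoI)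
    fix a assume "a < (INF N\<in>{n0..}. x N)"
    then have "a < x M" if "M \<ge> n0" for M using cINF_lower[OF bdd', of M] that by simp
    then show "eventually (\<lambda>M. a < x M) sequentially" by (auto simp: eventually_sequentially)
  next
    fix a assume "(INF N\<in>{n0..}. x N) < a"
    then obtain N where "N \<ge> n0" "x N < a" by (auto simp: cINF_less_iff[OF _ bdd'])
    then show "eventually (\<lambda>M. x M < a) sequentially"
      using less[of N "a - x N"] by simp
  qed
qed

lemma eventually_nth_diameter_less:
  assumes K: "bounded K" "infinite K" and N: "N \<ge> 2" and "\<epsilon> > 0"
  shows "eventually (\<lambda>M. nth_diameter M K < nth_diameter N K + \<epsilon>) sequentially"
proof -
  define c where "c = nth_diameter N K + \<epsilon> / 2"
  have c: "nth_diameter (Suc (N - 1)) K < c" "c > 0"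
    using N \<open>\<epsilon> > 0\<close> nth_diameter_pos[OF K, of N] by (simp_all add: c_def)
  have L: "N - 1 \<ge> 1" using N by simp
  obtain a :: "nat \<Rightarrow> complex" and J where J: "finite J" "card J = N - 1" "a ` J \<subseteq> K"
    "\<forall>z\<in>K. cmod (poly (\<Prod>j\<in>J. [:-a j, 1:]) z) \<le> c ^ (N - 1)"
    by (rule fekete_polynomial[OF K L c(1)])
  define w where "w = (\<Prod>j\<in>J. [:-a j, 1:])"
  have w: "lead_coeff w = 1" "degree w = N - 1"
    using linear_factors_prod(1,2)[OF J(1)] J(2) by (simp_all add: w_def)
  obtain G where G: "G \<ge> 1" "\<And>M. M \<ge> 2 \<Longrightarrow> nth_diameter M K \<le> (real M * G) powr (2 / (real M - 1)) * c"
    by (rule nth_diameter_le_chebyshev[OF K(1) infinite_imp_nonempty[OF K(2)] w L c(2)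
          J(4)[folded w_def]]) (rule that)
  have "eventually (\<lambda>M. (real M * G) powr (2 / (real M - 1)) * c < nth_diameter N K + \<epsilon>) sequentially"
    using tendsto_chebyshev_factor[of G c] G(1) \<open>\<epsilon> > 0\<close> by (intro order_tendstoD(2)) (auto simp: c_def)
  moreover have "eventually (\<lambda>M. M \<ge> (2::nat)) sequentially" by (rule eventually_ge_at_top)
  ultimately show ?thesis by eventually_elim (use G(2) in force)
qed

lemma tendsto_nth_diameter:
  assumes "compact K" "infinite K"
  shows "(\<lambda>N. nth_diameter N K) \<longlonglongrightarrow> transfinite_diameter K"
proof -
  have K: "bounded K" "K \<noteq> {}" using assms compact_imp_bounded by auto
  have "(\<lambda>N. nth_diameter N K) \<longlonglongrightarrow> (INF N\<in>{2..}. nth_diameter N K)"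
    using nth_diameter_nonneg[OF K]
    by (intro tendsto_Inf_of_eventually_less eventually_nth_diameter_less K(1) assms(2))
      (auto intro: bdd_belowI[of _ 0])
  then show ?thesis using assms(2) by (simp add: transfinite_diameter_def limI)
qed

lemma transfinite_diameter_nonneg:
  assumes "compact K"
  shows "transfinite_diameter K \<ge> 0"
proof (cases "finite K")
  case False
  then show ?thesis
    using tendsto_nth_diameter[OF assms False] nth_diameter_nonneg[of K] compact_imp_bounded[OF assms]
    by (intro LIMSEQ_le_const) auto
qed (simp add: transfinite_diameter_def)

lemma transfinite_diameter_pow_le:
  fixes w :: "complex poly"
  assumes K: "compact K" "K \<noteq> {}" and w: "lead_coeff w = 1" "degree w = L" "L \<ge> 1"
    and A: "\<forall>z\<in>K. cmod (poly w z) \<le> A"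
  shows "transfinite_diameter K ^ L \<le> A"
proof (cases "finite K")
  case True
  obtain z where "z \<in> K" using K(2) by auto
  then have "0 \<le> A" using A by (auto intro: order_trans[OF norm_ge_zero])
  then show ?thesis using True w(3) by (simp add: transfinite_diameter_def zero_power)
next
  case False
  show ?thesis
  proof (rule field_le_epsilon)
    fix \<delta> :: real assume "\<delta> > 0"
    obtain z where "z \<in> K" using K(2) by auto
    then have "0 < A + \<delta>" using A \<open>\<delta> > 0\<close> by (auto intro: add_nonneg_pos order_trans[OF norm_ge_zero])
    define a where "a = (A + \<delta>) powr (1 / real L)"
    have a: "a > 0" "a ^ L = A + \<delta>"
      using \<open>0 < A + \<delta>\<close> w(3) by (simp_all add: a_def powr_powr flip: powr_realpow)
    have "\<forall>z\<in>K. cmod (poly w z) \<le> a ^ L" using A a(2) \<open>\<delta> > 0\<close> by force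
    then obtain G where G: "G \<ge> 1"
      "\<And>M. M \<ge> 2 \<Longrightarrow> nth_diameter M K \<le> (real M * G) powr (2 / (real M - 1)) * a"
      by (rule nth_diameter_le_chebyshev[OF compact_imp_bounded[OF K(1)] K(2) w a(1)]) (rule that)
    have "(\<lambda>M. (real M * G) powr (2 / (real M - 1)) * a) \<longlonglongrightarrow> a"
      using G(1) by (intro tendsto_chebyshev_factor) auto
    then have "transfinite_diameter K \<le> a"
      by (rule LIMSEQ_le[OF tendsto_nth_diameter[OF K(1) False]]) (use G(2) in \<open>auto intro!: exI[of _ 2]\<close>)
    then show "transfinite_diameter K ^ L \<le> A + \<delta>"
      using transfinite_diameter_nonneg[OF K(1)] a power_mono by metis
  qed
qed

definition rational_preimage :: "complex poly \<Rightarrow> complex poly \<Rightarrow> complex set \<Rightarrow> complex set" where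
  "rational_preimage p q F = {z. poly q z \<noteq> 0 \<and> poly p z / poly q z \<in> F}"

lemma monic_diff_smult:
  fixes p q :: "'a::comm_ring_1 poly"
  assumes "lead_coeff p = 1" "degree q < degree p"
  shows "degree (p - smult w q) = degree p" "lead_coeff (p - smult w q) = 1"
proof -
  have coeff: "coeff (p - smult w q) (degree p) = 1" using assms by (simp add: coeff_eq_0)
  moreover have "degree (p - smult w q) \<le> degree p"
    using assms(2) by (intro degree_diff_le) (auto intro: order.trans[OF degree_smult_le])
  ultimately show "degree (p - smult w q) = degree p"
    by (metis le_antisym le_degree zero_neq_one)
  then show "lead_coeff (p - smult w q) = 1" using coeff by simp
qed

lemma poly_nonzero_of_coprime:
  fixes p q :: "'a::field poly"
  assumes "coprime p q" "poly p z = w * poly q z"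
  shows "poly q z \<noteq> 0"
proof
  assume "poly q z = 0"
  moreover from this have "poly p z = 0" using assms(2) by simp
  ultimately have "[:-z, 1:] dvd p" "[:-z, 1:] dvd q" by (simp_all add: poly_eq_0_iff_dvd)
  then have "is_unit [:-z, 1:]" using assms(1) coprime_common_divisor by blast
  then show False by (simp add: is_unit_iff_degree)
qed

lemma rational_preimage_roots:
  fixes p q :: "complex poly"
  assumes "coprime p q" "lead_coeff p = 1" "degree q < degree p"
  obtains r where "p - smult w q = (\<Prod>i<degree p. [:-r i, 1:])"
    "\<And>i. i < degree p \<Longrightarrow> poly q (r i) \<noteq> 0 \<and> poly p (r i) / poly q (r i) = w"
proof -
  obtain r where
    "smult (lead_coeff (p - smult w q)) (\<Prod>i<degree (p - smult w q). [:-r i, 1:]) = p - smult w q"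
    by (rule complex_poly_decompose')
  then have r: "p - smult w q = (\<Prod>i<degree p. [:-r i, 1:])"
    using monic_diff_smult[OF assms(2,3)] by simp
  have roots: "poly q (r i) \<noteq> 0 \<and> poly p (r i) / poly q (r i) = w" if "i < degree p" for i
  proof -
    have "poly (p - smult w q) (r i) = 0" unfolding r using that by (auto simp: poly_prod)
    then have "poly p (r i) = w * poly q (r i)" by simp
    moreover from this have "poly q (r i) \<noteq> 0" by (rule poly_nonzero_of_coprime[OF assms(1)])
    ultimately show ?thesis by simp
  qed
  show ?thesis by (rule that[OF r roots])
qed

lemma finite_rational_preimage:
  assumes "lead_coeff p = 1" "degree q < degree p" "finite F"
  shows "finite (rational_preimage p q F)"
proof (rule finite_subset)
  show "rational_preimage p q F \<subseteq> (\<Union>w\<in>F. {z. poly (p - smult w q) z = 0})"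
    by (force simp: rational_preimage_def)
  show "finite (\<Union>w\<in>F. {z. poly (p - smult w q) z = 0})"
  proof (intro finite_UN_I poly_roots_finite)
    fix w show "p - smult w q \<noteq> 0" using monic_diff_smult(2)[OF assms(1,2), of w] by auto
  qed (rule assms(3))
qed

lemma image_rational_preimage:
  assumes "coprime p q" "lead_coeff p = 1" "degree q < degree p"
  shows "(\<lambda>z. poly p z / poly q z) ` rational_preimage p q F = F"
proof
  show "F \<subseteq> (\<lambda>z. poly p z / poly q z) ` rational_preimage p q F"
  proof
    fix w assume "w \<in> F"
    obtain r where "p - smult w q = (\<Prod>i<degree p. [:-r i, 1:])"
      "\<And>i. i < degree p \<Longrightarrow> poly q (r i) \<noteq> 0 \<and> poly p (r i) / poly q (r i) = w"
      by (rule rational_preimage_roots[OF assms]) (rule that)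
    then have "poly q (r 0) \<noteq> 0" "poly p (r 0) / poly q (r 0) = w" using assms(3) by auto
    then show "w \<in> (\<lambda>z. poly p z / poly q z) ` rational_preimage p q F"
      using \<open>w \<in> F\<close> by (auto simp: rational_preimage_def intro!: image_eqI[of _ _ "r 0"])
  qed
qed (auto simp: rational_preimage_def)

lemma norm_prod_root_diffs:
  fixes p q :: "complex poly" and \<zeta> :: "nat \<Rightarrow> complex"
  assumes r: "p - smult w q = (\<Prod>i<n. [:-r i, 1:])" and "finite J" "\<forall>j\<in>J. poly q (\<zeta> j) \<noteq> 0"
  shows "(\<Prod>i<n. cmod (\<Prod>j\<in>J. r i - \<zeta> j))
           = (\<Prod>j\<in>J. cmod (poly q (\<zeta> j))) * cmod (\<Prod>j\<in>J. w - poly p (\<zeta> j) / poly q (\<zeta> j))"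
proof -
  have "cmod (poly q (\<zeta> j)) * cmod (w - poly p (\<zeta> j) / poly q (\<zeta> j)) = (\<Prod>i<n. cmod (r i - \<zeta> j))"
    if "j \<in> J" for j
  proof -
    have "poly q (\<zeta> j) * (w - poly p (\<zeta> j) / poly q (\<zeta> j)) = - poly (p - smult w q) (\<zeta> j)"
      using assms(3) that by (simp add: field_simps)
    also have "cmod \<dots> = (\<Prod>i<n. cmod (r i - \<zeta> j))"
      unfolding r by (simp add: poly_prod prod_norm norm_minus_commute)
    finally show ?thesis by (simp add: norm_mult)
  qed
  then have "(\<Prod>j\<in>J. cmod (poly q (\<zeta> j))) * cmod (\<Prod>j\<in>J. w - poly p (\<zeta> j) / poly q (\<zeta> j))
      = (\<Prod>j\<in>J. \<Prod>i<n. cmod (r i - \<zeta> j))"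
    by (simp add: prod.distrib[symmetric] flip: prod_norm)
  also have "\<dots> = (\<Prod>i<n. cmod (\<Prod>j\<in>J. r i - \<zeta> j))"
    by (subst prod.swap) (simp flip: prod_norm)
  finally show ?thesis ..
qed

lemma prod_monic_diff_smult:
  fixes p q :: "complex poly" and a :: "nat \<Rightarrow> complex"
  assumes "lead_coeff p = 1" "degree q < degree p" "finite J"
  shows "lead_coeff (\<Prod>j\<in>J. p - smult (a j) q) = 1"
    and "degree (\<Prod>j\<in>J. p - smult (a j) q) = card J * degree p"
proof -
  have "p - smult w q \<noteq> 0" for w using monic_diff_smult(2)[OF assms(1,2), of w] by auto
  then show "degree (\<Prod>j\<in>J. p - smult (a j) q) = card J * degree p"
    using assms(3) by (simp add: degree_prod_eq_sum_degree monic_diff_smult(1)[OF assms(1,2)])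
  show "lead_coeff (\<Prod>j\<in>J. p - smult (a j) q) = 1"
    unfolding lead_coeff_prod by (intro prod.neutral ballI monic_diff_smult(2)[OF assms(1,2)])
qed

lemma poly_prod_diff_smult:
  fixes p q :: "complex poly" and a :: "nat \<Rightarrow> complex"
  assumes "poly q z \<noteq> 0" "finite J"
  shows "poly (\<Prod>j\<in>J. p - smult (a j) q) z = poly q z ^ card J * (\<Prod>j\<in>J. poly p z / poly q z - a j)"
proof -
  have "poly (\<Prod>j\<in>J. p - smult (a j) q) z = (\<Prod>j\<in>J. poly q z * (poly p z / poly q z - a j))"
    unfolding poly_prod by (intro prod.cong refl) (simp add: assms(1) field_simps)
  then show ?thesis using assms(2) by (simp add: prod.distrib)
qed

lemma norm_prod_image_le:
  fixes p q :: "complex poly" and \<zeta> :: "nat \<Rightarrow> complex"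
  assumes "coprime p q" "lead_coeff p = 1" "degree q < degree p" "finite J"
    and \<zeta>: "\<zeta> ` J \<subseteq> rational_preimage p q F"
    and B: "\<forall>z\<in>rational_preimage p q F. cmod (\<Prod>j\<in>J. z - \<zeta> j) \<le> B" and w: "w \<in> F"
  shows "(\<Prod>j\<in>J. cmod (poly q (\<zeta> j))) * cmod (\<Prod>j\<in>J. w - poly p (\<zeta> j) / poly q (\<zeta> j)) \<le> B ^ degree p"
proof -
  obtain r where r: "p - smult w q = (\<Prod>i<degree p. [:-r i, 1:])"
    "\<And>i. i < degree p \<Longrightarrow> poly q (r i) \<noteq> 0 \<and> poly p (r i) / poly q (r i) = w"
    by (rule rational_preimage_roots[OF assms(1-3)]) (rule that)
  have "\<forall>j\<in>J. poly q (\<zeta> j) \<noteq> 0" using \<zeta> by (auto simp: rational_preimage_def)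
  then have "(\<Prod>j\<in>J. cmod (poly q (\<zeta> j))) * cmod (\<Prod>j\<in>J. w - poly p (\<zeta> j) / poly q (\<zeta> j))
      = (\<Prod>i<degree p. cmod (\<Prod>j\<in>J. r i - \<zeta> j))"
    by (rule norm_prod_root_diffs[OF r(1) assms(4), symmetric])
  also have "\<dots> \<le> (\<Prod>i<degree p. B)"
    using r(2) w B by (intro prod_mono) (auto simp: rational_preimage_def)
  finally show ?thesis by simp
qed

lemma transfinite_diameter_preimage_pow_le_approx:
  fixes p q :: "complex poly" and F :: "complex set"
  defines "S \<equiv> rational_preimage p q F"
  assumes p: "lead_coeff p = 1" "degree q < degree p"
    and S: "compact S" "S \<noteq> {}" and F: "bounded F" "infinite F"
    and M: "\<forall>z\<in>S. cmod (poly q z) \<le> M" and L: "L \<ge> 1" and c: "nth_diameter (Suc L) F < c"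
  shows "transfinite_diameter S ^ degree p \<le> M * c"
proof -
  obtain a :: "nat \<Rightarrow> complex" and J where J: "finite J" "card J = L" "a ` J \<subseteq> F"
    "\<forall>w\<in>F. cmod (poly (\<Prod>j\<in>J. [:-a j, 1:]) w) \<le> c ^ L"
    by (rule fekete_polynomial[OF F L c])
  obtain z0 where "z0 \<in> S" using S(2) by blast
  then have M0: "M \<ge> 0" using M by (auto intro: order_trans[OF norm_ge_zero])
  have "cmod (poly (\<Prod>j\<in>J. p - smult (a j) q) z) \<le> M ^ L * c ^ L" if z: "z \<in> S" for z
  proof -
    have "poly q z \<noteq> 0" "poly p z / poly q z \<in> F" using z by (auto simp: S_def rational_preimage_def)
    then show ?thesis
      using M M0 z J(4) by (simp add: poly_prod_diff_smult J(1,2) linear_factors_prod(3) norm_mult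
          norm_power prod_norm mult_mono power_mono)
  qed
  then have "transfinite_diameter S ^ (L * degree p) \<le> (M * c) ^ L"
    using prod_monic_diff_smult[OF p J(1), of a] J(2) L p(2)
    by (intro transfinite_diameter_pow_le[OF S]) (auto simp: power_mult_distrib)
  then have "(transfinite_diameter S ^ degree p) ^ L \<le> (M * c) ^ L"
    by (simp add: mult.commute flip: power_mult)
  moreover have "0 \<le> M * c"
    using M0 nth_diameter_nonneg[OF F(1) infinite_imp_nonempty[OF F(2)], of "Suc L"] c by simp
  ultimately show ?thesis
    using transfinite_diameter_nonneg[OF S(1)] L by (simp add: power_mono_iff)
qed

lemma transfinite_diameter_le_preimage_pow_approx:
  fixes p q :: "complex poly" and F :: "complex set"
  defines "S \<equiv> rational_preimage p q F"
  assumes pq: "coprime p q" "lead_coeff p = 1" "degree q < degree p"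
    and F: "compact F" "F \<noteq> {}" and S: "bounded S" "infinite S"
    and m: "m > 0" "\<forall>z\<in>S. m \<le> cmod (poly q z)" and L: "L \<ge> 1" and c: "nth_diameter (Suc L) S < c"
  shows "m * transfinite_diameter F \<le> c ^ degree p"
proof -
  obtain \<zeta> :: "nat \<Rightarrow> complex" and J where J: "finite J" "card J = L" "\<zeta> ` J \<subseteq> S"
    "\<forall>z\<in>S. cmod (poly (\<Prod>j\<in>J. [:-\<zeta> j, 1:]) z) \<le> c ^ L"
    by (rule fekete_polynomial[OF S L c])
  define T where "T = (\<Prod>j\<in>J. [:-(poly p (\<zeta> j) / poly q (\<zeta> j)), 1:])"
  have "(\<Prod>j\<in>J. m) \<le> (\<Prod>j\<in>J. cmod (poly q (\<zeta> j)))"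
    using m J(3) by (intro prod_mono) auto
  then have m_le: "m ^ L \<le> (\<Prod>j\<in>J. cmod (poly q (\<zeta> j)))" using J(2) by simp
  have "m ^ L * cmod (poly T w) \<le> (c ^ L) ^ degree p" if "w \<in> F" for w
    using mult_right_mono[OF m_le norm_ge_zero, of "poly T w"]
      norm_prod_image_le[OF pq J(1) J(3)[unfolded S_def] _ that] J(4)
    by (force simp: T_def S_def linear_factors_prod(3)[OF J(1)])
  then have "transfinite_diameter F ^ L \<le> (c ^ L) ^ degree p / m ^ L"
    using linear_factors_prod(1,2)[OF J(1)] J(2) L m(1)
    by (intro transfinite_diameter_pow_le[OF F]) (auto simp: T_def pos_le_divide_eq mult.commute)
  then have "(m * transfinite_diameter F) ^ L \<le> (c ^ degree p) ^ L"
    using m(1) by (simp add: power_mult_distrib pos_le_divide_eq mult.commute flip: power_mult)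
  moreover have "0 \<le> c"
    using nth_diameter_nonneg[OF S(1) infinite_imp_nonempty[OF S(2)], of "Suc L"] c by simp
  ultimately show ?thesis
    using transfinite_diameter_nonneg[OF F(1)] m(1) L by (simp add: power_mono_iff)
qed

lemma tendsto_nth_diameter_approx:
  assumes "compact K" "infinite K"
  shows "(\<lambda>L. nth_diameter (Suc L) K + inverse (real (Suc L))) \<longlonglongrightarrow> transfinite_diameter K"
  using tendsto_add[OF LIMSEQ_Suc[OF tendsto_nth_diameter[OF assms]] LIMSEQ_inverse_real_of_nat]
  by simp

lemma transfinite_diameter_preimage_pow_le:
  fixes p q :: "complex poly" and F :: "complex set"
  defines "S \<equiv> rational_preimage p q F"
  assumes p: "lead_coeff p = 1" "degree q < degree p"
    and S: "compact S" "S \<noteq> {}" and F: "compact F" "infinite F"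
    and M: "\<forall>z\<in>S. cmod (poly q z) \<le> M"
  shows "transfinite_diameter S ^ degree p \<le> M * transfinite_diameter F"
proof (rule LIMSEQ_le_const)
  show "(\<lambda>L. M * (nth_diameter (Suc L) F + inverse (real (Suc L)))) \<longlonglongrightarrow> M * transfinite_diameter F"
    by (intro tendsto_mult_left tendsto_nth_diameter_approx F)
  show "\<exists>N. \<forall>L\<ge>N. transfinite_diameter S ^ degree p \<le> M * (nth_diameter (Suc L) F + inverse (real (Suc L)))"
    using transfinite_diameter_preimage_pow_le_approx[where F = F, OF p, folded S_def,
        OF S compact_imp_bounded[OF F(1)] F(2) M]
    by (auto intro!: exI[of _ 1])
qed

lemma transfinite_diameter_le_preimage_pow:
  fixes p q :: "complex poly" and F :: "complex set"
  defines "S \<equiv> rational_preimage p q F"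
  assumes "coprime p q" "lead_coeff p = 1" "degree q < degree p"
    and F: "compact F" "F \<noteq> {}" and S: "compact S" "infinite S"
    and m: "m > 0" "\<forall>z\<in>S. m \<le> cmod (poly q z)"
  shows "m * transfinite_diameter F \<le> transfinite_diameter S ^ degree p"
proof (rule LIMSEQ_le_const)
  show "(\<lambda>L. (nth_diameter (Suc L) S + inverse (real (Suc L))) ^ degree p)
      \<longlonglongrightarrow> transfinite_diameter S ^ degree p"
    by (intro tendsto_power tendsto_nth_diameter_approx S)
  show "\<exists>N. \<forall>L\<ge>N. m * transfinite_diameter F \<le> (nth_diameter (Suc L) S + inverse (real (Suc L))) ^ degree p"
    using transfinite_diameter_le_preimage_pow_approx[where F = F, OF assms(2-4) F, folded S_def,
        OF compact_imp_bounded[OF S(1)] S(2) m]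
    by (auto intro!: exI[of _ 1])
qed

lemma pow_powr_inverse:
  assumes "x \<ge> 0" "n > 0"
  shows "(x ^ n) powr (1 / real n) = x"
  using root_powr_inverse[of n "x ^ n"] real_root_power_cancel[of n x] assms by simp

lemma le_powr_inverse_of_pow_le:
  assumes "x \<ge> 0" "n > 0" "x ^ n \<le> y"
  shows "x \<le> y powr (1 / real n)"
  using powr_mono2[of "1 / real n", OF _ _ assms(3)] pow_powr_inverse[OF assms(1,2)] assms(1) by simp

lemma powr_inverse_le_of_le_pow:
  assumes "x \<ge> 0" "y \<ge> 0" "n > 0" "y \<le> x ^ n"
  shows "y powr (1 / real n) \<le> x"
  using powr_mono2[of "1 / real n", OF _ assms(2,4)] pow_powr_inverse[OF assms(1,3)] by simp

lemma transfinite_diameter_rational_preimage_bounds: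
  fixes p q :: "complex poly" and F :: "complex set"
  defines "S \<equiv> rational_preimage p q F"
  assumes pq: "coprime p q" "lead_coeff p = 1" "degree q < degree p"
    and F: "compact F" and S: "compact S" "S \<noteq> {}"
    and m: "m \<ge> 0" "\<forall>z\<in>S. m \<le> cmod (poly q z)" and M: "\<forall>z\<in>S. cmod (poly q z) \<le> M"
  shows "(m * transfinite_diameter F) powr (1 / real (degree p)) \<le> transfinite_diameter S
    \<and> transfinite_diameter S \<le> (M * transfinite_diameter F) powr (1 / real (degree p))"
proof (cases "finite F")
  case True
  then have "finite S" unfolding S_def by (rule finite_rational_preimage[OF pq(2,3)])
  with True show ?thesis by (simp add: transfinite_diameter_def)
next
  case False
  then have "infinite S"
    using image_rational_preimage[OF pq, of F] unfolding S_def by (metis finite_imageI)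
  have n: "degree p > 0" and tS: "transfinite_diameter S \<ge> 0" and tF: "transfinite_diameter F \<ge> 0"
    using pq(3) transfinite_diameter_nonneg S(1) F by auto
  have "transfinite_diameter S \<le> (M * transfinite_diameter F) powr (1 / real (degree p))"
    using transfinite_diameter_preimage_pow_le[where F = F, OF pq(2,3), folded S_def, OF S F False M]
    by (intro le_powr_inverse_of_pow_le tS n)
  moreover have "(m * transfinite_diameter F) powr (1 / real (degree p)) \<le> transfinite_diameter S"
  proof (cases "m = 0")
    case False
    with m(1) have "m * transfinite_diameter F \<le> transfinite_diameter S ^ degree p"
      using transfinite_diameter_le_preimage_pow[where F = F, OF pq F infinite_imp_nonempty[OF \<open>infinite F\<close>],
          folded S_def, OF S(1) \<open>infinite S\<close> _ m(2)] by simp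
    then show ?thesis using m(1) tF by (intro powr_inverse_le_of_le_pow tS n) simp_all
  qed (simp add: tS)
  ultimately show ?thesis by blast
qed

theorem mainTheorem20:
  fixes p q :: "complex poly" and n k :: nat and F :: "complex set"
  assumes "lead_coeff p = 1" "degree p = n"
    and "q \<noteq> 0" "degree q = k" "k < n"
    and "coprime p q"
    and "compact F"
    and "compact {z. poly q z \<noteq> 0 \<and> poly p z / poly q z \<in> F}"
    and "{z. poly q z \<noteq> 0 \<and> poly p z / poly q z \<in> F} \<noteq> {}"
  shows "((INF z\<in>{z. poly q z \<noteq> 0 \<and> poly p z / poly q z \<in> F}. cmod (poly q z))
            * transfinite_diameter F) powr (1 / real n)
           \<le> transfinite_diameter {z. poly q z \<noteq> 0 \<and> poly p z / poly q z \<in> F}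
       \<and> transfinite_diameter {z. poly q z \<noteq> 0 \<and> poly p z / poly q z \<in> F}
           \<le> ((SUP z\<in>{z. poly q z \<noteq> 0 \<and> poly p z / poly q z \<in> F}. cmod (poly q z))
            * transfinite_diameter F) powr (1 / real n)"
proof -
  define S where "S = rational_preimage p q F"
  have S_eq: "{z. poly q z \<noteq> 0 \<and> poly p z / poly q z \<in> F} = S"
    by (simp add: S_def rational_preimage_def)
  have S: "compact S" "S \<noteq> {}" using assms(8,9) by (simp_all add: S_eq)
  have "compact ((\<lambda>z. cmod (poly q z)) ` S)" by (intro compact_continuous_image continuous_intros S)
  then have bdd: "bdd_below ((\<lambda>z. cmod (poly q z)) ` S)" "bdd_above ((\<lambda>z. cmod (poly q z)) ` S)"
    by (auto intro: bounded_imp_bdd_below bounded_imp_bdd_above compact_imp_bounded)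
  have "(INF z\<in>S. cmod (poly q z)) \<ge> 0" using S(2) by (intro cINF_greatest) auto
  moreover have "\<forall>z\<in>S. (INF z\<in>S. cmod (poly q z)) \<le> cmod (poly q z)"
    using bdd(1) by (auto intro: cINF_lower)
  moreover have "\<forall>z\<in>S. cmod (poly q z) \<le> (SUP z\<in>S. cmod (poly q z))"
    using bdd(2) by (auto intro: cSUP_upper)
  ultimately show ?thesis
    using transfinite_diameter_rational_preimage_bounds[OF assms(6) assms(1) _ assms(7), folded S_def, OF _ S]
      assms(2,4,5) unfolding S_eq by simp
qed

end
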